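(* For every positive integer $n$, the set $\mathcal{M}_n$ is a closed subset of $\mathbb{R}$.
   Context: For reals $\xi\ne\xi'$ and a positive integer $n$, $\mu_n(\xi,\xi') = \sup_{(s,t)\in\mathbb{Z}^2\setminus\{0\}} \dfrac{\gcd(t,n)\,|\xi-\xi'|}{|s-t\xi|\,|s-t\xi'|} \in\mathbb{R}\cup\{\infty\}$ (with $\gcd(0,n)=n$), and $\mathcal{M}_n$ is the set of finite values of $\mu_n(\xi,\xi')$ over pairs of reals $\xi\neq\xi'$. *)

theory Defs
  imports "HOL-Analysis.Analysis" "HOL-Library.Extended_Real"
begin

text \<open>The quantity gcd(t,n)|xi-xi'| / (|s - t xi| |s - t xi'|) for a pair (s,t),
  as an extended real; a zero denominator (with xi ~= xi') gives infinity.
  Note gcd 0 n = n holds for the library gcd.\<close>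
definition mu_term :: "nat \<Rightarrow> real \<Rightarrow> real \<Rightarrow> int \<Rightarrow> int \<Rightarrow> ereal" where
  "mu_term n \<xi> \<xi>' s t =
     (let d = \<bar>real_of_int s - real_of_int t * \<xi>\<bar> * \<bar>real_of_int s - real_of_int t * \<xi>'\<bar>
      in if d = 0 then \<infinity>
         else ereal (real_of_int (gcd t (int n)) * \<bar>\<xi> - \<xi>'\<bar> / d))"

definition mu :: "nat \<Rightarrow> real \<Rightarrow> real \<Rightarrow> ereal" where
  "mu n \<xi> \<xi>' = (SUP st \<in> (UNIV :: (int \<times> int) set) - {(0, 0)}. mu_term n \<xi> \<xi>' (fst st) (snd st))"

definition M_set :: "nat \<Rightarrow> real set" where
  "M_set n = {r. \<exists>\<xi> \<xi>'. \<xi> \<noteq> \<xi>' \<and> mu n \<xi> \<xi>' = ereal r}"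

end

theory Submission
  imports Defs "HOL-Analysis.Kronecker_Approximation_Theorem"
begin

text \<open>By Dirichlet approximation every value of mu_n is at least 1/2. Given a value of
  mu_n(x, y), replace a nearly optimal (s, t) by a primitive vector and complete it to a matrix
  in SL2(Z); the Moebius change of variables turns mu_n into a supremum with the weight
  gcd(s c + t d, n), evaluated at a pair (e, e') with 0 \<le> e < 1, for which (1, 0) is nearly
  optimal, so that \<bar>e - e'\<bar> is bounded by the value. For values converging to l, pass to a
  subsequence on which (c, d) is constant modulo n and (e, e') converges. The supremum is lower
  semicontinuous and its (1, 0)-term is continuous, so the limit pair realises l, and the
  matrix transports it back to a pair realising l for mu_n.\<close>

text \<open>Pulling mu_n back along a Moebius map with bottom row (c, d) transforms (s, t)
  contragrediently and turns the weight gcd(t, n) into gcd(s c + t d, n); see mu_moebius.\<close>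
definition twisted_mu_term :: "nat \<Rightarrow> int \<Rightarrow> int \<Rightarrow> real \<Rightarrow> real \<Rightarrow> int \<Rightarrow> int \<Rightarrow> ereal" where
  "twisted_mu_term n c d x y s t =
     (let D = \<bar>real_of_int s - real_of_int t * x\<bar> * \<bar>real_of_int s - real_of_int t * y\<bar>
      in if D = 0 then \<infinity>
         else ereal (real_of_int (gcd (s * c + t * d) (int n)) * \<bar>x - y\<bar> / D))"

definition twisted_mu :: "nat \<Rightarrow> int \<Rightarrow> int \<Rightarrow> real \<Rightarrow> real \<Rightarrow> ereal" where
  "twisted_mu n c d x y =
     (SUP st \<in> (UNIV :: (int \<times> int) set) - {(0, 0)}. twisted_mu_term n c d x y (fst st) (snd st))"

lemma mu_eq_twisted_mu: "mu n x y = twisted_mu n 0 1 x y"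
  by (simp add: mu_def twisted_mu_def mu_term_def twisted_mu_term_def)

lemma twisted_mu_term_le_ereal_iff:
  "twisted_mu_term n c d x y s t \<le> ereal r \<longleftrightarrow>
     (let D = \<bar>real_of_int s - real_of_int t * x\<bar> * \<bar>real_of_int s - real_of_int t * y\<bar>
      in D > 0 \<and> real_of_int (gcd (s * c + t * d) (int n)) * \<bar>x - y\<bar> \<le> r * D)"
  by (auto simp: twisted_mu_term_def Let_def divide_le_eq less_le)

lemma twisted_mu_le_ereal_iff:
  "twisted_mu n c d x y \<le> ereal r \<longleftrightarrow>
     (\<forall>s t. (s, t) \<noteq> (0, 0) \<longrightarrow> twisted_mu_term n c d x y s t \<le> ereal r)"
  unfolding twisted_mu_def SUP_le_iff by (simp add: Ball_def split_paired_All)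

lemma twisted_mu_term_le_twisted_mu:
  "(s, t) \<noteq> (0, 0) \<Longrightarrow> twisted_mu_term n c d x y s t \<le> twisted_mu n c d x y"
  unfolding twisted_mu_def by (rule SUP_upper2[of "(s, t)"]) auto

lemma twisted_mu_term_1_0:
  "twisted_mu_term n c d x y 1 0 = ereal (real_of_int (gcd c (int n)) * \<bar>x - y\<bar>)"
  by (simp add: twisted_mu_term_def)

lemma twisted_mu_finite_imp_nonzero:
  assumes "twisted_mu n c d x y = ereal r" and "(s, t) \<noteq> (0, 0)"
  shows "real_of_int s - real_of_int t * x \<noteq> 0" "real_of_int s - real_of_int t * y \<noteq> 0"
  using assms twisted_mu_le_ereal_iff[of n c d x y r] twisted_mu_term_le_ereal_iff[of n c d x y s t r]
  by (auto simp: Let_def)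

lemma twisted_mu_mod:
  assumes "c mod int n = c' mod int n" and "d mod int n = d' mod int n"
  shows "twisted_mu n c d = twisted_mu n c' d'"
proof -
  have "(s * c + t * d) mod int n = (s * c' + t * d') mod int n" for s t
    using assms by (intro mod_add_cong mod_mult_cong) auto
  then have "gcd (s * c + t * d) (int n) = gcd (s * c' + t * d') (int n)" for s t
    by (metis gcd.commute gcd_red_int)
  then show ?thesis
    by (simp add: fun_eq_iff twisted_mu_def twisted_mu_term_def)
qed

lemma moebius_diff:
  fixes a b c d :: int and x y :: real
  assumes "a * d - b * c = 1" and "c * x + d \<noteq> 0" and "c * y + d \<noteq> 0"
  shows "(a * x + b) / (c * x + d) - (a * y + b) / (c * y + d) = (x - y) / ((c * x + d) * (c * y + d))"
proof -
  have det: "real_of_int a * d - real_of_int b * c = 1"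
    using assms(1) by (metis of_int_1 of_int_diff of_int_mult)
  have "(a * x + b) * (c * y + d) - (a * y + b) * (c * x + d) = (real_of_int a * d - real_of_int b * c) * (x - y)"
    by (simp add: algebra_simps)
  with det assms(2,3) show ?thesis
    by (simp add: divide_simps)
qed

lemma moebius_linear_form:
  fixes a b c d s t :: int and x :: real
  assumes "c * x + d \<noteq> 0"
  shows "s - t * ((a * x + b) / (c * x + d)) =
    (real_of_int (s * d - t * b) - real_of_int (t * a - s * c) * x) / (c * x + d)"
  using assms by (simp add: field_simps)

lemma mu_term_moebius:
  fixes a b c d :: int and x y :: real
  assumes det: "a * d - b * c = 1" and nx: "c * x + d \<noteq> 0" and ny: "c * y + d \<noteq> 0"
  shows "mu_term n ((a * x + b) / (c * x + d)) ((a * y + b) / (c * y + d)) s t =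
    twisted_mu_term n c d x y (s * d - t * b) (t * a - s * c)"
proof -
  define s' t' where "s' = s * d - t * b" and "t' = t * a - s * c"
  have row: "s' * c + t' * d = t"
  proof -
    have "s' * c + t' * d = t * (a * d - b * c)" by (simp add: s'_def t'_def algebra_simps)
    with det show ?thesis by simp
  qed
  define q where "q = \<bar>c * x + d\<bar> * \<bar>c * y + d\<bar>"
  have q: "q > 0" using nx ny by (simp add: q_def)
  have D: "\<bar>s - t * ((a * x + b) / (c * x + d))\<bar> * \<bar>s - t * ((a * y + b) / (c * y + d))\<bar> =
      \<bar>real_of_int s' - real_of_int t' * x\<bar> * \<bar>real_of_int s' - real_of_int t' * y\<bar> / q"
    unfolding moebius_linear_form[OF nx] moebius_linear_form[OF ny] s'_def t'_def q_def
    by (simp add: abs_mult abs_divide)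
  have diff: "\<bar>(a * x + b) / (c * x + d) - (a * y + b) / (c * y + d)\<bar> = \<bar>x - y\<bar> / q"
    unfolding moebius_diff[OF det nx ny] q_def by (simp add: abs_mult abs_divide)
  show ?thesis
    unfolding mu_term_def twisted_mu_term_def Let_def D diff
    unfolding s'_def[symmetric] t'_def[symmetric] row
    using q by simp
qed

lemma mu_moebius:
  fixes a b c d :: int and x y :: real
  assumes det: "a * d - b * c = 1" and nx: "c * x + d \<noteq> 0" and ny: "c * y + d \<noteq> 0"
  shows "mu n ((a * x + b) / (c * x + d)) ((a * y + b) / (c * y + d)) = twisted_mu n c d x y"
proof -
  define P where "P = (\<lambda>(s, t). (s * d - t * b, t * a - s * c))"
  define Q where "Q = (\<lambda>(s, t). (s * a + t * b, s * c + t * d))"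
  have "P \<circ> Q = id" "Q \<circ> P = id"
    using det by (auto simp: fun_eq_iff P_def Q_def algebra_simps)
  then have "bij P" by (metis o_bij)
  then have img: "P ` (UNIV - {(0, 0)}) = UNIV - {(0, 0)}"
    by (simp add: image_set_diff bij_is_inj bij_is_surj P_def)
  have "mu n ((a * x + b) / (c * x + d)) ((a * y + b) / (c * y + d)) =
      (SUP st \<in> UNIV - {(0, 0)}. twisted_mu_term n c d x y (fst (P st)) (snd (P st)))"
    unfolding mu_def by (simp add: mu_term_moebius[OF det nx ny] P_def case_prod_beta)
  also have "\<dots> = (SUP st \<in> P ` (UNIV - {(0, 0)}). twisted_mu_term n c d x y (fst st) (snd st))"
    by (simp add: image_comp)
  finally show ?thesis unfolding img twisted_mu_def .
qed

lemma gcd_mult_left_le: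
  fixes g v k :: int
  assumes "g > 0"
  shows "gcd (g * v) k \<le> g * gcd v k"
proof (cases "gcd v k = 0")
  case False
  have "gcd (g * v) k dvd gcd (g * v) (g * k)"
    by (simp add: gcd_greatest)
  also have "\<dots> = g * gcd v k"
    using assms by (simp add: gcd_mult_left)
  finally show ?thesis
    using False assms by (intro zdvd_imp_le) (auto simp: less_le)
qed simp

lemma mu_term_mult_le:
  fixes g u v :: int
  assumes g: "g > 0"
  shows "mu_term n x y (g * u) (g * v) \<le> mu_term n x y u v"
proof -
  define D where "D = \<bar>real_of_int u - real_of_int v * x\<bar> * \<bar>real_of_int u - real_of_int v * y\<bar>"
  have D_mult: "\<bar>real_of_int (g * u) - real_of_int (g * v) * x\<bar> * \<bar>real_of_int (g * u) - real_of_int (g * v) * y\<bar>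
      = real_of_int g ^ 2 * D"
  proof -
    have "real_of_int (g * u) - real_of_int (g * v) * z = g * (real_of_int u - real_of_int v * z)" for z
      by (simp add: algebra_simps)
    then show ?thesis
      using g by (simp add: D_def abs_mult power2_eq_square)
  qed
  have "gcd (g * v) (int n) \<le> g * gcd v (int n)"
    using g by (rule gcd_mult_left_le)
  also have "\<dots> \<le> g ^ 2 * gcd v (int n)"
    using g by (intro mult_right_mono) (auto simp: power2_eq_square)
  finally have "real_of_int (gcd (g * v) (int n)) \<le> real_of_int g ^ 2 * gcd v (int n)"
    by (metis of_int_le_iff of_int_mult of_int_power)
  then have "real_of_int (gcd (g * v) (int n)) * \<bar>x - y\<bar> / (real_of_int g ^ 2 * D)
      \<le> real_of_int g ^ 2 * gcd v (int n) * \<bar>x - y\<bar> / (real_of_int g ^ 2 * D)"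
    by (intro divide_right_mono mult_right_mono) (auto simp: D_def)
  then show ?thesis
    unfolding mu_term_def Let_def D_mult D_def[symmetric] using g by simp
qed

lemma exists_coprime_mu_term_ge:
  assumes "(u, v) \<noteq> (0, 0)"
  obtains u' v' where "coprime u' v'" "mu_term n x y u v \<le> mu_term n x y u' v'"
proof -
  have "gcd u v > 0"
    using assms by auto
  moreover obtain u' v' where "u = u' * gcd u v" "v = v' * gcd u v" "coprime u' v'"
    using gcd_coprime_exists[of u v] assms by auto
  ultimately show ?thesis
    using that mu_term_mult_le[of "gcd u v" n x y u' v'] by (simp add: mult.commute)
qed

lemma moebius_inverse:
  fixes u v b d :: int and x e :: real
  assumes det: "u * d - b * v = 1" and nz: "u - v * x \<noteq> 0"
  defines "e \<equiv> (d * x - b) / (u - v * x)"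
  shows "v * e + d \<noteq> 0" and "x = (u * e + b) / (v * e + d)"
proof -
  have det': "real_of_int u * d - real_of_int b * v = 1"
    using det by (metis of_int_1 of_int_diff of_int_mult)
  have "v * e + d = (real_of_int u * d - real_of_int b * v) / (u - v * x)"
    and "u * e + b = (real_of_int u * d - real_of_int b * v) * x / (u - v * x)"
    using nz by (simp_all add: e_def field_simps)
  then have "v * e + d = 1 / (u - v * x)" and "u * e + b = x / (u - v * x)"
    by (simp_all add: det')
  with nz show "v * e + d \<noteq> 0" and "x = (u * e + b) / (v * e + d)"
    by simp_all
qed

text \<open>Completing the primitive vector (u, v) to a matrix of determinant 1 leaves the second
  column free up to adding multiples of (u, v); this freedom puts the preimage of x into [0, 1).\<close>
lemma coprime_moebius_normal_form:
  fixes u v :: int and x y :: real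
  assumes cop: "coprime u v" and nx: "u - v * x \<noteq> 0" and ny: "u - v * y \<noteq> 0"
  obtains b d :: int and e e' :: real
  where "u * d - b * v = 1" "0 \<le> e" "e < 1" "v * e + d \<noteq> 0" "v * e' + d \<noteq> 0"
    "x = (u * e + b) / (v * e + d)" "y = (u * e' + b) / (v * e' + d)"
proof -
  obtain p q where "p * u + q * v = 1"
    using bezout_int[of u v] cop by auto
  define m where "m = \<lfloor>(p * x + q) / (u - v * x)\<rfloor>"
  define b d where "b = m * u - q" and "d = p + m * v"
  have det: "u * d - b * v = 1"
    using \<open>p * u + q * v = 1\<close> by (simp add: b_def d_def algebra_simps)
  define e where "e = (d * x - b) / (u - v * x)"
  have "e = (p * x + q) / (u - v * x) - m"
    using nx by (simp add: e_def b_def d_def field_simps)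
  then have "0 \<le> e" "e < 1"
    unfolding m_def by linarith+
  define e' where "e' = (d * y - b) / (u - v * y)"
  show ?thesis
    using moebius_inverse[OF det nx, folded e_def] moebius_inverse[OF det ny, folded e'_def]
    by (intro that[OF det \<open>0 \<le> e\<close> \<open>e < 1\<close>])
qed

lemma M_set_normal_form:
  assumes "z \<in> M_set n" and "\<epsilon> > 0"
  obtains a b c d :: int and e e' :: real
  where "a * d - b * c = 1" "0 \<le> e" "e < 1" "twisted_mu n c d e e' = ereal z"
    "z - \<epsilon> < real_of_int (gcd c (int n)) * \<bar>e - e'\<bar>"
proof -
  obtain x y where xy: "x \<noteq> y" "mu n x y = ereal z"
    using assms(1) by (auto simp: M_set_def)
  then have "ereal (z - \<epsilon>) < mu n x y"
    using assms(2) by simp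
  then obtain st where "st \<in> UNIV - {(0, 0)}" "ereal (z - \<epsilon>) < mu_term n x y (fst st) (snd st)"
    unfolding mu_def less_SUP_iff by blast
  then obtain s t where st: "(s, t) \<noteq> (0, 0)" "ereal (z - \<epsilon>) < mu_term n x y s t"
    by (cases st) auto
  obtain u v where uv: "coprime u v" "mu_term n x y s t \<le> mu_term n x y u v"
    using exists_coprime_mu_term_ge[OF st(1)] by blast
  have "(u, v) \<noteq> (0, 0)"
    using uv(1) by auto
  then have nx: "u - v * x \<noteq> 0" and ny: "u - v * y \<noteq> 0"
    using twisted_mu_finite_imp_nonzero[of n 0 1 x y z u v] xy(2) by (simp_all add: mu_eq_twisted_mu)
  obtain b d :: int and e e' :: real where nf: "u * d - b * v = 1" "0 \<le> e" "e < 1" "v * e + d \<noteq> 0" "v * e' + d \<noteq> 0"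
    "x = (u * e + b) / (v * e + d)" "y = (u * e' + b) / (v * e' + d)"
    by (rule coprime_moebius_normal_form[OF uv(1) nx ny])
  have "mu n x y = twisted_mu n v d e e'"
    by (subst nf(6), subst nf(7)) (rule mu_moebius[OF nf(1,4,5)])
  moreover have "mu_term n x y u v = twisted_mu_term n v d e e' 1 0"
  proof -
    have "mu_term n x y u v = twisted_mu_term n v d e e' (u * d - v * b) (v * u - u * v)"
      by (subst nf(6), subst nf(7)) (rule mu_term_moebius[OF nf(1,4,5)])
    with nf(1) show ?thesis
      by (simp add: mult.commute)
  qed
  moreover have "ereal (z - \<epsilon>) < mu_term n x y u v"
    using st(2) uv(2) by (rule less_le_trans)
  ultimately show ?thesis
    using that[OF nf(1-3)] xy(2) by (simp add: twisted_mu_term_1_0)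
qed

text \<open>Dirichlet's approximation theorem gives h/k with k \<le> N and \<bar>h - k x\<bar> < 1/N; for
  N > 1/\<bar>x - y\<bar> the same h/k is then also close to y.\<close>
lemma Dirichlet_approx_pair:
  fixes x y :: real
  assumes "x \<noteq> y"
  obtains h k :: int
  where "k > 0" "\<bar>h - k * x\<bar> * \<bar>h - k * y\<bar> < 2 * \<bar>x - y\<bar>"
proof -
  define \<delta> where "\<delta> = \<bar>x - y\<bar>"
  have \<delta>: "\<delta> > 0"
    using assms by (simp add: \<delta>_def)
  obtain N :: nat where N: "1 / \<delta> < N"
    using reals_Archimedean2 by blast
  have N_pos: "N > 0"
    using N \<delta> by (metis divide_pos_pos of_nat_0_less_iff order.strict_trans zero_less_one)
  have N_inv: "1 / N < \<delta>"
    using N \<delta> N_pos by (simp add: field_simps)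
  obtain h k where k: "0 < k" "k \<le> int N" and hk: "\<bar>of_int k * x - of_int h\<bar> < 1 / N"
    using Dirichlet_approx[OF N_pos] by blast
  define A B where "A = \<bar>real_of_int h - k * x\<bar>" and "B = \<bar>real_of_int h - k * y\<bar>"
  have A: "A < 1 / N"
    using hk by (simp add: A_def abs_minus_commute)
  have "B = \<bar>(h - k * x) + k * (x - y)\<bar>"
    unfolding B_def by (simp add: algebra_simps)
  also have "\<dots> \<le> A + k * \<delta>"
    unfolding A_def \<delta>_def using k(1) by (metis abs_triangle_ineq abs_mult abs_of_pos of_int_0_less_iff)
  also have "\<dots> \<le> A + N * \<delta>"
    using k(2) \<delta> by (intro add_left_mono mult_right_mono) auto
  finally have B: "B < 1 / N + N * \<delta>"
    using A by linarith
  have "A * B \<le> 1 / N * (1 / N + N * \<delta>)"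
    using A B by (intro mult_mono) (auto simp: B_def)
  also have "\<dots> < 2 * \<delta>"
  proof -
    have "1 / N * (1 / N) \<le> 1 / N"
      using N_pos by (simp add: field_simps)
    then show ?thesis
      using N_pos N_inv by (simp add: distrib_left)
  qed
  finally show ?thesis
    using that k(1) by (simp add: A_def B_def \<delta>_def)
qed

lemma mu_ge_half:
  assumes "x \<noteq> y"
  shows "ereal (1 / 2) \<le> mu n x y"
proof -
  obtain h k :: int where k: "k > 0" and hk: "\<bar>h - k * x\<bar> * \<bar>h - k * y\<bar> < 2 * \<bar>x - y\<bar>"
    using Dirichlet_approx_pair[OF assms] by blast
  have "ereal (1 / 2) \<le> mu_term n x y h k"
  proof (cases "\<bar>h - k * x\<bar> * \<bar>h - k * y\<bar> = 0")
    case False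
    then have "1 / 2 \<le> \<bar>x - y\<bar> / (\<bar>h - k * x\<bar> * \<bar>h - k * y\<bar>)"
      using hk by (simp add: field_simps)
    also have "\<dots> \<le> real_of_int (gcd k (int n)) * \<bar>x - y\<bar> / (\<bar>h - k * x\<bar> * \<bar>h - k * y\<bar>)"
    proof (intro divide_right_mono)
      have "1 \<le> real_of_int (gcd k (int n))"
        using k by (simp add: int_one_le_iff_zero_less)
      from mult_right_mono[OF this, of "\<bar>x - y\<bar>"]
      show "\<bar>x - y\<bar> \<le> real_of_int (gcd k (int n)) * \<bar>x - y\<bar>"
        by simp
    qed simp
    finally show ?thesis
      using False by (simp add: mu_term_def)
  qed (simp add: mu_term_def)
  also have "\<dots> \<le> mu n x y"
    unfolding mu_def using k by (intro SUP_upper2[of "(h, k)"]) auto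
  finally show ?thesis .
qed

lemma M_set_ge_half:
  assumes "z \<in> M_set n"
  shows "1 / 2 \<le> z"
proof -
  obtain x y where "x \<noteq> y" "mu n x y = ereal z"
    using assms by (auto simp: M_set_def)
  with mu_ge_half[of x y n] show ?thesis
    by simp
qed

text \<open>Each term of the supremum is continuous in (x, y) as long as it is finite, so the
  supremum is lower semicontinuous; n > 0 keeps the limit terms away from the value \<infinity>.\<close>
lemma twisted_mu_le_limit:
  assumes n: "n > 0" and le: "\<And>j. twisted_mu n c d (x j) (y j) \<le> ereal (z j)"
    and x: "x \<longlonglongrightarrow> x0" and y: "y \<longlonglongrightarrow> y0" and z: "z \<longlonglongrightarrow> l" and xy0: "x0 \<noteq> y0"
  shows "twisted_mu n c d x0 y0 \<le> ereal l"
  unfolding twisted_mu_le_ereal_iff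
proof (intro allI impI)
  fix s t :: int
  assume st: "(s, t) \<noteq> (0, 0)"
  define w where "w = real_of_int (gcd (s * c + t * d) (int n))"
  define D where "D = (\<lambda>x y. \<bar>real_of_int s - real_of_int t * x\<bar> * \<bar>real_of_int s - real_of_int t * y\<bar>)"
  have "w * \<bar>x j - y j\<bar> \<le> z j * D (x j) (y j)" for j
    using le[of j] st by (auto simp: twisted_mu_le_ereal_iff twisted_mu_term_le_ereal_iff Let_def w_def D_def)
  moreover have "(\<lambda>j. w * \<bar>x j - y j\<bar>) \<longlonglongrightarrow> w * \<bar>x0 - y0\<bar>"
    by (intro tendsto_intros x y)
  moreover have "(\<lambda>j. z j * D (x j) (y j)) \<longlonglongrightarrow> l * D x0 y0"
    unfolding D_def by (intro tendsto_intros x y z)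
  ultimately have "w * \<bar>x0 - y0\<bar> \<le> l * D x0 y0"
    using LIMSEQ_le by blast
  moreover have "w * \<bar>x0 - y0\<bar> > 0"
    using n xy0 by (simp add: w_def)
  moreover have "D x0 y0 \<ge> 0"
    by (simp add: D_def)
  ultimately have "D x0 y0 > 0"
    by (cases "D x0 y0 = 0") auto
  with \<open>w * \<bar>x0 - y0\<bar> \<le> l * D x0 y0\<close> show "twisted_mu_term n c d x0 y0 s t \<le> ereal l"
    by (simp add: twisted_mu_term_le_ereal_iff Let_def w_def D_def)
qed

lemma twisted_mu_limit:
  assumes n: "n > 0" and eq: "\<And>j. twisted_mu n c d (x j) (y j) = ereal (z j)"
    and x: "x \<longlonglongrightarrow> x0" and y: "y \<longlonglongrightarrow> y0" and z: "z \<longlonglongrightarrow> l" and l: "l > 0"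
    and gap: "(\<lambda>j. z j - real_of_int (gcd c (int n)) * \<bar>x j - y j\<bar>) \<longlonglongrightarrow> 0"
  shows "x0 \<noteq> y0" and "twisted_mu n c d x0 y0 = ereal l"
proof -
  have "(\<lambda>j. real_of_int (gcd c (int n)) * \<bar>x j - y j\<bar>) \<longlonglongrightarrow> real_of_int (gcd c (int n)) * \<bar>x0 - y0\<bar>"
    by (intro tendsto_intros x y)
  moreover have "(\<lambda>j. real_of_int (gcd c (int n)) * \<bar>x j - y j\<bar>) \<longlonglongrightarrow> l - 0"
    using tendsto_diff[OF z gap] by simp
  ultimately have l_eq: "l = real_of_int (gcd c (int n)) * \<bar>x0 - y0\<bar>"
    using LIMSEQ_unique by fastforce
  with l show "x0 \<noteq> y0"
    by auto
  show "twisted_mu n c d x0 y0 = ereal l"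
  proof (rule antisym)
    show "twisted_mu n c d x0 y0 \<le> ereal l"
      using twisted_mu_le_limit[OF n _ x y z \<open>x0 \<noteq> y0\<close>] eq by simp
    show "ereal l \<le> twisted_mu n c d x0 y0"
      using twisted_mu_term_le_twisted_mu[of 1 0 n c d x0 y0] l_eq by (simp add: twisted_mu_term_1_0)
  qed
qed

lemma twisted_mu_in_M_set:
  assumes det: "a * d - b * c = 1" and eq: "twisted_mu n c d x y = ereal l" and xy: "x \<noteq> y"
  shows "l \<in> M_set n"
proof -
  have "(d, - c) \<noteq> (0, 0)"
    using det by auto
  from twisted_mu_finite_imp_nonzero[OF eq this]
  have nx: "c * x + d \<noteq> 0" and ny: "c * y + d \<noteq> 0"
    by (simp_all add: algebra_simps)
  have "(a * x + b) / (c * x + d) \<noteq> (a * y + b) / (c * y + d)"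
    using moebius_diff[OF det nx ny] xy nx ny by auto
  moreover have "mu n ((a * x + b) / (c * x + d)) ((a * y + b) / (c * y + d)) = ereal l"
    using mu_moebius[OF det nx ny] eq by simp
  ultimately show ?thesis
    unfolding M_set_def by blast
qed

lemma finite_range_imp_constant_subseq:
  assumes "finite (range f)"
  obtains r :: "nat \<Rightarrow> nat" where "strict_mono r" "\<And>j. f (r j) = f (r 0)"
proof -
  obtain k where "infinite {j. f j = f k}"
    using pigeonhole_infinite[OF infinite_UNIV_nat assms] by auto
  then obtain r :: "nat \<Rightarrow> nat" where "strict_mono r" "\<And>j. r j \<in> {j. f j = f k}"
    using infinite_enumerate by blast
  then show ?thesis
    using that by auto
qed

lemma subseq_constant_mod_convergent:
  fixes c d :: "nat \<Rightarrow> int" and e e' :: "nat \<Rightarrow> real"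
  assumes n: "n > 0" and bounded: "bounded (range (\<lambda>k. (e k, e' k)))"
  obtains \<sigma> :: "nat \<Rightarrow> nat" and x0 y0 :: real
  where "strict_mono \<sigma>"
    "\<And>j. c (\<sigma> j) mod int n = c (\<sigma> 0) mod int n" "\<And>j. d (\<sigma> j) mod int n = d (\<sigma> 0) mod int n"
    "(\<lambda>j. e (\<sigma> j)) \<longlonglongrightarrow> x0" "(\<lambda>j. e' (\<sigma> j)) \<longlonglongrightarrow> y0"
proof -
  have "range (\<lambda>k. (c k mod int n, d k mod int n)) \<subseteq> {0..<int n} \<times> {0..<int n}"
    using n by auto
  then have "finite (range (\<lambda>k. (c k mod int n, d k mod int n)))"
    by (rule finite_subset) auto
  then obtain r :: "nat \<Rightarrow> nat" where r: "strict_mono r"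
    and r_mod: "\<And>j. (c (r j) mod int n, d (r j) mod int n) = (c (r 0) mod int n, d (r 0) mod int n)"
    using finite_range_imp_constant_subseq by blast
  have "bounded (range (\<lambda>j. (e (r j), e' (r j))))"
    using bounded by (rule bounded_subset) auto
  then obtain q L where q: "strict_mono q" and L: "((\<lambda>j. (e (r j), e' (r j))) \<circ> q) \<longlonglongrightarrow> L"
    using bounded_imp_convergent_subsequence by blast
  show ?thesis
  proof
    show "strict_mono (r \<circ> q)"
      using r q by (rule strict_mono_o)
    show "c ((r \<circ> q) j) mod int n = c ((r \<circ> q) 0) mod int n"
      and "d ((r \<circ> q) j) mod int n = d ((r \<circ> q) 0) mod int n" for j
      using r_mod[of "q j"] r_mod[of "q 0"] by simp_all
    show "(\<lambda>j. e ((r \<circ> q) j)) \<longlonglongrightarrow> fst L" "(\<lambda>j. e' ((r \<circ> q) j)) \<longlonglongrightarrow> snd L"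
      using tendsto_fst[OF L] tendsto_snd[OF L] by (simp_all add: comp_def)
  qed
qed

lemma normal_forms_limit_in_M_set:
  assumes n: "n > 0"
    and det: "\<And>k. a k * d k - b k * c k = 1"
    and e: "\<And>k. e k \<in> {0..1}"
    and eq: "\<And>k. twisted_mu n (c k) (d k) (e k) (e' k) = ereal (z k)"
    and gap: "(\<lambda>k. z k - real_of_int (gcd (c k) (int n)) * \<bar>e k - e' k\<bar>) \<longlonglongrightarrow> 0"
    and z: "z \<longlonglongrightarrow> l" and l: "l > 0"
  shows "l \<in> M_set n"
proof -
  obtain B where B: "\<And>k. \<bar>z k\<bar> \<le> B"
    using convergent_imp_bounded[OF z] unfolding bounded_real by auto
  have bd: "\<bar>e k - e' k\<bar> \<le> B" for k
  proof -
    have "1 * \<bar>e k - e' k\<bar> \<le> real_of_int (gcd (c k) (int n)) * \<bar>e k - e' k\<bar>"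
      using n by (intro mult_right_mono) (auto simp: int_one_le_iff_zero_less)
    also have "\<dots> \<le> z k"
      using twisted_mu_term_le_twisted_mu[of 1 0 n "c k" "d k" "e k" "e' k"] eq[of k]
      by (simp add: twisted_mu_term_1_0)
    finally show ?thesis
      using B[of k] by simp
  qed
  have "e' k \<in> {-B..B + 1}" for k
    using e[of k] bd[of k] by (auto simp: abs_le_iff)
  with e have "range (\<lambda>k. (e k, e' k)) \<subseteq> {0..1} \<times> {-B..B + 1}"
    by blast
  then have bounded: "bounded (range (\<lambda>k. (e k, e' k)))"
    by (rule bounded_subset[rotated]) (intro bounded_Times bounded_closed_interval)
  obtain \<sigma> x0 y0 where \<sigma>: "strict_mono \<sigma>"
    and c_mod: "\<And>j. c (\<sigma> j) mod int n = c (\<sigma> 0) mod int n"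
    and d_mod: "\<And>j. d (\<sigma> j) mod int n = d (\<sigma> 0) mod int n"
    and e_\<sigma>: "(\<lambda>j. e (\<sigma> j)) \<longlonglongrightarrow> x0" and e'_\<sigma>: "(\<lambda>j. e' (\<sigma> j)) \<longlonglongrightarrow> y0"
    using subseq_constant_mod_convergent[OF n bounded, where c = c and d = d] by blast
  define k0 where "k0 = \<sigma> 0"
  have eq_\<sigma>: "twisted_mu n (c k0) (d k0) (e (\<sigma> j)) (e' (\<sigma> j)) = ereal (z (\<sigma> j))" for j
    using eq[of "\<sigma> j"] twisted_mu_mod[OF c_mod[of j] d_mod[of j]] by (simp add: k0_def)
  have z_\<sigma>: "(\<lambda>j. z (\<sigma> j)) \<longlonglongrightarrow> l"
    using LIMSEQ_subseq_LIMSEQ[OF z \<sigma>] by (simp add: comp_def)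
  have "gcd (c (\<sigma> j)) (int n) = gcd (c k0) (int n)" for j
    using c_mod[of j] unfolding k0_def by (metis gcd.commute gcd_red_int)
  then have gap_\<sigma>: "(\<lambda>j. z (\<sigma> j) - real_of_int (gcd (c k0) (int n)) * \<bar>e (\<sigma> j) - e' (\<sigma> j)\<bar>) \<longlonglongrightarrow> 0"
    using LIMSEQ_subseq_LIMSEQ[OF gap \<sigma>] by (simp add: comp_def)
  note limit = twisted_mu_limit[OF n eq_\<sigma> e_\<sigma> e'_\<sigma> z_\<sigma> l gap_\<sigma>]
  from twisted_mu_in_M_set[OF det[of k0] limit(2,1)] show ?thesis .
qed

lemma M_set_sequentially_closed:
  assumes n: "n > 0" and z_in: "\<And>k. z k \<in> M_set n" and z: "z \<longlonglongrightarrow> l"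
  shows "l \<in> M_set n"
proof -
  have "\<exists>a b c d e e'. a * d - b * c = 1 \<and> 0 \<le> e \<and> e < 1 \<and> twisted_mu n c d e e' = ereal (z k)
      \<and> z k - inverse (Suc k) < real_of_int (gcd c (int n)) * \<bar>e - e'\<bar>" for k
    using M_set_normal_form[OF z_in[of k], of "inverse (Suc k)"] by (metis inverse_positive_iff_positive of_nat_0_less_iff zero_less_Suc)
  then obtain a b c d :: "nat \<Rightarrow> int" and e e' :: "nat \<Rightarrow> real"
    where nf: "\<And>k. a k * d k - b k * c k = 1 \<and> 0 \<le> e k \<and> e k < 1
        \<and> twisted_mu n (c k) (d k) (e k) (e' k) = ereal (z k)
        \<and> z k - inverse (Suc k) < real_of_int (gcd (c k) (int n)) * \<bar>e k - e' k\<bar>"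
    by metis
  have "0 \<le> z k - real_of_int (gcd (c k) (int n)) * \<bar>e k - e' k\<bar>" for k
    using twisted_mu_term_le_twisted_mu[of 1 0 n "c k" "d k" "e k" "e' k"] nf[of k]
    by (simp add: twisted_mu_term_1_0)
  moreover have "z k - real_of_int (gcd (c k) (int n)) * \<bar>e k - e' k\<bar> \<le> inverse (Suc k)" for k
    using nf[of k] by linarith
  ultimately have "(\<lambda>k. z k - real_of_int (gcd (c k) (int n)) * \<bar>e k - e' k\<bar>) \<longlonglongrightarrow> 0"
    by (intro tendsto_sandwich[OF _ _ tendsto_const LIMSEQ_inverse_real_of_nat]) auto
  moreover have "l > 0"
    using LIMSEQ_le_const[OF z, of "1 / 2"] M_set_ge_half[OF z_in] by fastforce
  ultimately show ?thesis
    using normal_forms_limit_in_M_set[OF n, of a d b c e e' z] nf z by fastforce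
qed

theorem proposition3p6:
  fixes n :: nat
  assumes "n > 0"
  shows "closed (M_set n)"
  unfolding closed_sequential_limits using M_set_sequentially_closed[OF assms] by blast

end
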